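(* Let $m$ be a positive integer and $p$ a prime such that $m\not\equiv 0\pmod 3$ and $p\equiv 1\pmod 3$. Then there is a constant $\beta>0$ such that for all sufficiently large $X$, \[ \#\{ n \leq X : p_{mp,p}(n)\equiv 1\pmod{2} \} \geq \beta \log\log X . \]
   Context: A partition $\lambda$ of a non-negative integer $n$ is a non-increasing sequence of positive integers (its parts) summing to $n$. For positive integers $A$ and $a$, $\mathrm{mex}_{A,a}(\lambda)$ denotes the smallest positive integer congruent to $a$ modulo $A$ that is not a part of $\lambda$. Then $p_{A,a}(n)$ denotes the number of partitions $\lambda$ of $n$ satisfying $\mathrm{mex}_{A,a}(\lambda)\equiv a \pmod{2A}$. Here $n$ ranges over positive integers. *)

theory Defs
  imports "HOL-Analysis.Analysis" "HOL-Library.Multiset"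
begin

definition partitions :: "nat \<Rightarrow> nat multiset set" where
  "partitions n = {L. (\<forall>x\<in>#L. 0 < x) \<and> sum_mset L = n}"

definition mex :: "nat \<Rightarrow> nat \<Rightarrow> nat multiset \<Rightarrow> nat" where
  "mex A a L = (LEAST k. 0 < k \<and> k mod A = a mod A \<and> k \<notin># L)"

definition p_mex :: "nat \<Rightarrow> nat \<Rightarrow> nat \<Rightarrow> nat" where
  "p_mex A a n = card {L \<in> partitions n. mex A a L mod (2 * A) = a mod (2 * A)}"

end

(*
  Modulo 2 everything reduces to Euler's pentagonal number theorem. Franklin's involution shows
  that the number q(n) of partitions of n into distinct parts is odd exactly when n is a
  generalised pentagonal number, and moving the smallest part between a partition and a partition
  into distinct parts shows that sum_x p(x) q(N - x) is odd only for N = 0.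

  The mex of L in the class a mod A is a + J A, where J is the index of the first term of
  a, a + A, a + 2A, ... missing from L, and p_{A,a}(n) counts the partitions with J even.
  Modulo 2 this count is sum_j p(n - s_j), s_j the partial sums of the progression, so convolving
  with q shows: #{x <= N : p_{A,a}(x) odd, N - x generalised pentagonal} is odd iff N is some s_j.
  For a = p and A = mp every such N is a multiple of p.

  If p_{A,a}(c) is odd but p_{A,a}(x) is even for c < x <= c + pent(c + 3), then for
  N = c + pent(k), k = c + 1, c + 2, c + 3, only x = c is counted, because no generalised
  pentagonal number lies strictly between pent(k) and pent(k) + k. So p divides three numbers
  with differences 3c + 4 and 3c + 7, hence p divides 3, which p = 1 mod 3 excludes.
  Consecutive odd values therefore grow at most quadratically, and at least (1/2) log log X of
  them lie below X.
*)

theory Submission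
  imports Defs "HOL-Library.Z2" "HOL-Real_Asymp.Real_Asymp"
begin

declare add_bit_eq_xor [simp del] mult_bit_eq_and [simp del]

section \<open>Sums and counting modulo 2\<close>

lemma of_nat_bit: "(of_nat n :: bit) = of_bool (odd n)"
  by (induction n) auto

lemma sum_of_bool_atMost:
  fixes N :: nat
  shows "(\<Sum>x\<le>N. of_bool (P x) :: 'a::semiring_1) = of_nat (card {x. x \<le> N \<and> P x})"
proof -
  have "(of_nat (card {x \<in> {..N}. P x}) :: 'a) = (\<Sum>x\<in>{x \<in> {..N}. P x}. 1)" by simp
  also have "\<dots> = (\<Sum>x\<le>N. if P x then 1 else 0)" by (rule sum.inter_filter) simp
  also have "\<dots> = (\<Sum>x\<le>N. of_bool (P x))" by (simp only: of_bool_def)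
  finally show ?thesis unfolding atMost_iff by (rule sym)
qed

lemma card_bit_eq_0_if_involution:
  assumes "\<And>x. x \<in> S \<Longrightarrow> f x \<in> S" "\<And>x. x \<in> S \<Longrightarrow> f (f x) = x" "\<And>x. x \<in> S \<Longrightarrow> f x \<noteq> x"
  shows "(of_nat (card S) :: bit) = 0"
proof -
  have "(\<Sum>x\<in>S. 1 :: bit) = 0"
    by (rule sum_involution_eq_0[where h = f]) (use assms in auto)
  then show ?thesis by simp
qed

lemma sum_atMost_convolution_shift:
  fixes f :: "nat \<Rightarrow> nat \<Rightarrow> 'a::comm_monoid_add"
  shows "(\<Sum>x\<le>N. if c \<le> x then f (x - c) (N - x) else 0)
    = (if c \<le> N then \<Sum>y\<le>N - c. f y (N - c - y) else 0)"
proof (cases "c \<le> N")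
  case True
  have "(\<Sum>x\<le>N. if c \<le> x then f (x - c) (N - x) else 0) = (\<Sum>x\<in>{c..N}. f (x - c) (N - x))"
    by (rule sum.mono_neutral_cong_right) auto
  also have "\<dots> = (\<Sum>y\<in>{0..N - c}. f (y + c - c) (N - (y + c)))"
    using True sum.shift_bounds_cl_nat_ivl[of "\<lambda>x. f (x - c) (N - x)" 0 c "N - c"] by simp
  also have "\<dots> = (\<Sum>y\<le>N - c. f y (N - c - y))" by (simp add: atLeast0AtMost add.commute)
  finally show ?thesis using True by simp
qed simp

section \<open>Partitions\<close>

lemma mem_le_sum_mset: "x \<in># L \<Longrightarrow> x \<le> sum_mset (L :: nat multiset)"
  by (auto dest!: multi_member_split)

lemma finite_partitions: "finite (partitions n)"
proof (rule finite_subset)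
  show "partitions n \<subseteq> (\<Union>k\<le>n. multisets_of_size {1..n} k)"
  proof
    fix L assume "L \<in> partitions n"
    then have L: "\<forall>x\<in>#L. 0 < x" "sum_mset L = n" unfolding partitions_def by auto
    have "set_mset L \<subseteq> {1..n}" using L mem_le_sum_mset[of _ L] by (auto simp: Suc_le_eq)
    moreover have "size L \<le> sum_mset L"
      using L(1) by (induction L) auto
    ultimately show "L \<in> (\<Union>k\<le>n. multisets_of_size {1..n} k)"
      unfolding multisets_of_size_def using L(2) by auto
  qed
qed auto

lemma partitions_0: "partitions 0 = {{#}}"
proof -
  have "L = {#}" if "\<forall>x\<in>#L. 0 < x" "sum_mset L = 0" for L :: "nat multiset"
  proof -
    have "\<forall>x\<in>#L. x = 0" using that(2) by simp
    with that(1) show ?thesis by (metis less_irrefl multiset_nonemptyE)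
  qed
  then show ?thesis unfolding partitions_def by auto
qed

definition distinct_partitions :: "nat \<Rightarrow> nat set set" where
  "distinct_partitions n = {D. finite D \<and> 0 \<notin> D \<and> \<Sum>D = n}"

lemma distinct_partitions_subset: "distinct_partitions n \<subseteq> Pow {1..n}"
proof
  fix D assume "D \<in> distinct_partitions n"
  then have D: "finite D" "0 \<notin> D" "\<Sum>D = n" by (auto simp: distinct_partitions_def)
  have "x \<le> n" if "x \<in> D" for x using D that member_le_sum[of x D id] by auto
  moreover have "1 \<le> x" if "x \<in> D" for x using D(2) that by (cases x) auto
  ultimately show "D \<in> Pow {1..n}" by auto
qed

lemma finite_distinct_partitions: "finite (distinct_partitions n)"
  using distinct_partitions_subset finite_subset by blast

lemma distinct_partitions_0: "distinct_partitions 0 = {{}}"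
  unfolding distinct_partitions_def by (auto simp: gr0I)

definition exchange_smallest :: "nat \<times> nat multiset \<times> nat set \<Rightarrow> nat \<times> nat multiset \<times> nat set" where
  "exchange_smallest = (\<lambda>(x, L, D). let s = Min (set_mset L \<union> D) in
     if s \<in> D then (x + s, add_mset s L, D - {s}) else (x - s, L - {#s#}, insert s D))"

lemma exchange_smallest_from_distinct:
  assumes "s = Min (set_mset L \<union> D)" "s \<in> D"
  shows "exchange_smallest (x, L, D) = (x + s, add_mset s L, D - {s})"
    and "exchange_smallest (x + s, add_mset s L, D - {s}) = (x, L, D)"
proof -
  have "set_mset (add_mset s L) \<union> (D - {s}) = set_mset L \<union> D" using assms(2) by auto
  then show "exchange_smallest (x, L, D) = (x + s, add_mset s L, D - {s})"
    and "exchange_smallest (x + s, add_mset s L, D - {s}) = (x, L, D)"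
    using assms(2) by (simp_all add: exchange_smallest_def Let_def assms(1)[symmetric] insert_absorb)
qed

lemma exchange_smallest_from_partition:
  assumes "s = Min (set_mset L \<union> D)" "s \<notin> D" "s \<in># L"
  shows "exchange_smallest (x, L, D) = (x - s, L - {#s#}, insert s D)"
    and "exchange_smallest (x - s, L - {#s#}, insert s D) = (x - s + s, L, D)"
proof -
  obtain L0 where L0: "L = add_mset s L0" using multi_member_split[OF assms(3)] by blast
  have "set_mset (L - {#s#}) \<union> insert s D = set_mset L \<union> D" unfolding L0 by auto
  then show "exchange_smallest (x, L, D) = (x - s, L - {#s#}, insert s D)"
    and "exchange_smallest (x - s, L - {#s#}, insert s D) = (x - s + s, L, D)"
    using assms(2,3) by (simp_all add: exchange_smallest_def Let_def assms(1)[symmetric])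
qed

lemma exchange_smallest_involution:
  assumes "0 < N" and t: "t \<in> (SIGMA x:{..N}. partitions x \<times> distinct_partitions (N - x))"
  shows "exchange_smallest t \<in> (SIGMA x:{..N}. partitions x \<times> distinct_partitions (N - x))
    \<and> exchange_smallest (exchange_smallest t) = t \<and> exchange_smallest t \<noteq> t"
proof -
  from t obtain x L D where t: "t = (x, L, D)" and x: "x \<le> N"
    and L: "\<forall>y\<in>#L. 0 < y" "sum_mset L = x" and D: "finite D" "0 \<notin> D" "\<Sum>D = N - x"
    unfolding partitions_def distinct_partitions_def by auto
  define s where "s = Min (set_mset L \<union> D)"
  have "set_mset L \<union> D \<noteq> {}" using L D x assms(1) by auto
  then have s_in: "s \<in> set_mset L \<union> D" unfolding s_def using D(1) by (intro Min_in) auto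
  then have s_pos: "0 < s" using L(1) D(2) by (auto intro: gr0I)
  show ?thesis
  proof (cases "s \<in> D")
    case True
    have "s \<le> N - x" using member_le_sum[of s D id] True D by simp
    moreover have "add_mset s L \<in> partitions (x + s)" using L s_pos by (simp add: partitions_def)
    moreover have "D - {s} \<in> distinct_partitions (N - (x + s))"
      using D True by (simp add: distinct_partitions_def sum_diff1_nat)
    ultimately show ?thesis using exchange_smallest_from_distinct[OF s_def True] t x s_pos by simp
  next
    case False
    then have s_L: "s \<in># L" using s_in by simp
    have s_le: "s \<le> x" using mem_le_sum_mset[OF s_L] L(2) by simp
    have "L - {#s#} \<in> partitions (x - s)"
      using L s_L by (auto simp: partitions_def dest: in_diffD dest!: multi_member_split)
    moreover have "insert s D \<in> distinct_partitions (N - (x - s))"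
      using D False s_pos s_le x by (simp add: distinct_partitions_def)
    moreover have "x - s \<noteq> x" using s_pos s_le by simp
    ultimately show ?thesis using exchange_smallest_from_partition[OF s_def False s_L] t x s_le by simp
  qed
qed

lemma partition_distinct_convolution_bit:
  "(\<Sum>x\<le>N. of_nat (card (partitions x) * card (distinct_partitions (N - x))) :: bit) = of_bool (N = 0)"
proof (cases "N = 0")
  case True
  then show ?thesis by (simp add: partitions_0 distinct_partitions_0)
next
  case False
  define T where "T = (SIGMA x:{..N}. partitions x \<times> distinct_partitions (N - x))"
  have "card T = (\<Sum>x\<le>N. card (partitions x) * card (distinct_partitions (N - x)))"
    unfolding T_def
    by (subst card_SigmaI) (auto simp: card_cartesian_product finite_partitions finite_distinct_partitions)
  moreover have "(of_nat (card T) :: bit) = 0"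
    using exchange_smallest_involution[of N] False unfolding T_def[symmetric]
    by (intro card_bit_eq_0_if_involution[where f = exchange_smallest]) blast+
  ultimately show ?thesis using False by (simp add: of_nat_sum del: of_nat_mult)
qed

section \<open>Franklin's involution\<close>

text \<open>The slope is the
  length of the run of consecutive parts ending at the largest part. If the smallest part s is
  at most the slope, s is removed and the s largest parts are increased by one; otherwise the
  slope many largest parts are decreased by one and the slope becomes a new part. The
  exceptional sets are those where this is impossible.\<close>

definition slope :: "nat set \<Rightarrow> nat" where
  "slope D = (LEAST t. Max D - t \<notin> D)"

definition franklin :: "nat set \<Rightarrow> nat set" where
  "franklin D = (if Min D \<le> slope D
     then {Max D + 2 - Min D..Max D + 1} \<union> (D - {Min D} - {Max D + 1 - Min D..Max D})
     else insert (slope D) ({Max D - slope D..Max D - 1} \<union> (D - {Max D + 1 - slope D..Max D})))"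

definition franklin_exceptional :: "nat set \<Rightarrow> bool" where
  "franklin_exceptional D \<longleftrightarrow>
     (Min D \<le> slope D \<and> Max D + 1 \<le> 2 * Min D) \<or> (slope D < Min D \<and> Max D \<le> 2 * slope D)"

lemma sum_shift_interval: "\<Sum>{Suc a..Suc b} = \<Sum>{a..b} + card {a..b}"
proof -
  have "\<Sum>{Suc a..Suc b} = (\<Sum>x\<in>{a..b}. Suc x)"
    by (simp only: sum.shift_bounds_cl_Suc_ivl)
  also have "\<dots> = \<Sum>{a..b} + card {a..b}" unfolding Suc_eq_plus1 sum.distrib by simp
  finally show ?thesis .
qed

lemma slope_eqI:
  assumes "\<And>t. t < k \<Longrightarrow> Max D - t \<in> D" "Max D - k \<notin> D"
  shows "slope D = k"
  unfolding slope_def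
proof (rule Least_equality)
  show "Max D - k \<notin> D" by fact
  fix y assume "Max D - y \<notin> D" then show "k \<le> y" using assms(1) by (meson not_le)
qed

lemma finite_franklin: "finite D \<Longrightarrow> finite (franklin D)"
  by (simp add: franklin_def)

locale part_set =
  fixes D :: "nat set"
  assumes finite_D: "finite D" and D_nonempty: "D \<noteq> {}" and zero_notin_D: "0 \<notin> D"
begin

lemma Min_in_D: "Min D \<in> D" and Max_in_D: "Max D \<in> D"
  using finite_D D_nonempty by simp_all

lemma Min_le_D: "x \<in> D \<Longrightarrow> Min D \<le> x" and le_Max_D: "x \<in> D \<Longrightarrow> x \<le> Max D"
  using finite_D by simp_all

lemma Min_pos: "0 < Min D"
  using Min_in_D zero_notin_D by (metis gr0I)

lemma Max_minus_slope_notin: "Max D - slope D \<notin> D"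
  unfolding slope_def by (rule LeastI[of _ "Max D"]) (simp add: zero_notin_D)

lemma Max_minus_in_if_less_slope: "t < slope D \<Longrightarrow> Max D - t \<in> D"
  unfolding slope_def using not_less_Least by blast

lemma slope_le_Max: "slope D \<le> Max D"
  unfolding slope_def by (rule Least_le) (simp add: zero_notin_D)

lemma slope_pos: "0 < slope D"
  using Max_minus_slope_notin Max_in_D by (cases "slope D") auto

lemma top_run_subset: "{Max D + 1 - slope D..Max D} \<subseteq> D"
proof
  fix x assume "x \<in> {Max D + 1 - slope D..Max D}"
  then have "Max D - (Max D - x) = x" "Max D - x < slope D" by auto
  then show "x \<in> D" using Max_minus_in_if_less_slope[of "Max D - x"] by simp
qed

lemma Min_le_top_run: "Min D \<le> Max D + 1 - slope D"
  using top_run_subset slope_pos slope_le_Max by (intro Min_le_D) auto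

context
  assumes smallest_le_slope: "Min D \<le> slope D" and room_smallest: "2 * Min D \<le> Max D"
begin

lemma top_run_smallest: "{Max D + 1 - Min D..Max D} \<subseteq> D"
  by (rule order_trans[OF _ top_run_subset]) (use smallest_le_slope in auto)

lemma franklin_smallest_eq:
  "franklin D = {Max D + 2 - Min D..Max D + 1} \<union> (D - {Min D} - {Max D + 1 - Min D..Max D})"
  unfolding franklin_def using smallest_le_slope by (simp only: if_True)

lemma mem_franklin_smallest:
  "x \<in> franklin D \<longleftrightarrow>
     (x \<in> D \<and> Min D < x \<and> x < Max D + 1 - Min D) \<or> (Max D + 2 - Min D \<le> x \<and> x \<le> Max D + 1)"
  unfolding franklin_smallest_eq using le_Max_D[of x] Min_le_D[of x] by auto

lemma Max_franklin_smallest: "Max (franklin D) = Max D + 1"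
proof (rule Max_eqI)
  show "finite (franklin D)" using finite_D by (rule finite_franklin)
  show "y \<le> Max D + 1" if "y \<in> franklin D" for y
    using that mem_franklin_smallest[of y] le_Max_D[of y] by auto
  show "Max D + 1 \<in> franklin D" using mem_franklin_smallest[of "Max D + 1"] Min_pos by auto
qed

lemma part_set_franklin_smallest: "part_set (franklin D)"
proof
  show "finite (franklin D)" by (simp add: finite_D finite_franklin)
  show "franklin D \<noteq> {}" using mem_franklin_smallest[of "Max D + 1"] Min_pos by auto
  show "0 \<notin> franklin D" using mem_franklin_smallest[of 0] room_smallest by auto
qed

lemma Min_franklin_smallest: "Min D < Min (franklin D)"
proof -
  interpret F: part_set "franklin D" by (rule part_set_franklin_smallest)
  show ?thesis
    using F.Min_in_D mem_franklin_smallest[of "Min (franklin D)"] room_smallest by auto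
qed

lemma slope_franklin_smallest: "slope (franklin D) = Min D"
proof (rule slope_eqI)
  show "Max (franklin D) - t \<in> franklin D" if "t < Min D" for t
    using that mem_franklin_smallest[of "Max D + 1 - t"] unfolding Max_franklin_smallest by auto
  show "Max (franklin D) - Min D \<notin> franklin D"
    using mem_franklin_smallest[of "Max D + 1 - Min D"] room_smallest
    unfolding Max_franklin_smallest by auto
qed

lemma not_exceptional_franklin_smallest: "\<not> franklin_exceptional (franklin D)"
  unfolding franklin_exceptional_def slope_franklin_smallest Max_franklin_smallest
  using Min_franklin_smallest room_smallest by auto

lemma sum_franklin_smallest: "\<Sum>(franklin D) = \<Sum>D"
proof -
  let ?run = "{Max D + 1 - Min D..Max D}" and ?rest = "D - {Min D} - {Max D + 1 - Min D..Max D}"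
  have "D = insert (Min D) (?run \<union> ?rest)" using top_run_smallest Min_in_D by auto
  moreover have "Min D \<notin> ?run \<union> ?rest" using room_smallest by auto
  ultimately have "\<Sum>D = Min D + \<Sum>(?run \<union> ?rest)" using finite_D by (metis finite_insert sum.insert)
  also have "\<Sum>(?run \<union> ?rest) = \<Sum>?run + \<Sum>?rest"
    using finite_D by (intro sum.union_disjoint) auto
  finally have "\<Sum>D = Min D + (\<Sum>?run + \<Sum>?rest)" .
  moreover have "\<Sum>(franklin D) = \<Sum>{Max D + 2 - Min D..Max D + 1} + \<Sum>?rest"
    unfolding franklin_smallest_eq using le_Max_D finite_D by (subst sum.union_disjoint) auto
  moreover have "\<Sum>{Max D + 2 - Min D..Max D + 1} = \<Sum>?run + Min D"
  proof -
    have "{Max D + 2 - Min D..Max D + 1} = {Suc (Max D + 1 - Min D)..Suc (Max D)}"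
      using room_smallest by auto
    then have "\<Sum>{Max D + 2 - Min D..Max D + 1} = \<Sum>?run + card ?run"
      using sum_shift_interval[of "Max D + 1 - Min D" "Max D"] by (simp only:)
    moreover have "card ?run = Min D" using room_smallest by simp
    ultimately show ?thesis by simp
  qed
  ultimately show ?thesis by simp
qed

lemma franklin_franklin_smallest: "franklin (franklin D) = D"
proof -
  have "franklin (franklin D)
      = insert (Min D) ({Max D + 1 - Min D..Max D} \<union> (franklin D - {Max D + 2 - Min D..Max D + 1}))"
    unfolding franklin_def[of "franklin D"] using Min_franklin_smallest
    by (simp add: slope_franklin_smallest Max_franklin_smallest)
  also have "\<dots> = D"
  proof (intro set_eqI)
    fix x
    show "x \<in> insert (Min D) ({Max D + 1 - Min D..Max D} \<union> (franklin D - {Max D + 2 - Min D..Max D + 1}))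
      \<longleftrightarrow> x \<in> D"
      using mem_franklin_smallest[of x] top_run_smallest le_Max_D[of x] Min_le_D[of x] Min_in_D by auto
  qed
  finally show ?thesis .
qed

end

context
  assumes slope_less_smallest: "slope D < Min D" and room_slope: "2 * slope D < Max D"
begin

lemma franklin_slope_eq:
  "franklin D = insert (slope D) ({Max D - slope D..Max D - 1} \<union> (D - {Max D + 1 - slope D..Max D}))"
  unfolding franklin_def using slope_less_smallest by (simp only: not_le[symmetric] if_False)

lemma mem_franklin_slope:
  "x \<in> franklin D \<longleftrightarrow>
     (x \<in> D \<and> x < Max D - slope D) \<or> (Max D - slope D \<le> x \<and> x \<le> Max D - 1) \<or> x = slope D"
proof -
  have "x \<in> D \<Longrightarrow> x \<noteq> Max D - slope D" using Max_minus_slope_notin by auto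
  then show ?thesis unfolding franklin_slope_eq using le_Max_D[of x] by auto
qed

lemma Max_franklin_slope: "Max (franklin D) = Max D - 1"
proof (rule Max_eqI)
  show "finite (franklin D)" using finite_D by (rule finite_franklin)
  show "y \<le> Max D - 1" if "y \<in> franklin D" for y
    using that mem_franklin_slope[of y] room_slope by auto
  show "Max D - 1 \<in> franklin D" using mem_franklin_slope[of "Max D - 1"] slope_pos by auto
qed

lemma Min_franklin_slope: "Min (franklin D) = slope D"
proof (rule Min_eqI)
  have "slope D < y" if "y \<in> D" for y using Min_le_D[OF that] slope_less_smallest by simp
  then show "slope D \<le> y" if "y \<in> franklin D" for y
    using that mem_franklin_slope[of y] room_slope by fastforce
  show "finite (franklin D)" using finite_D by (rule finite_franklin)
  show "slope D \<in> franklin D" using mem_franklin_slope[of "slope D"] by simp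
qed

lemma part_set_franklin_slope: "part_set (franklin D)"
proof
  show "finite (franklin D)" by (simp add: finite_D finite_franklin)
  show "franklin D \<noteq> {}" using mem_franklin_slope[of "slope D"] by auto
  show "0 \<notin> franklin D" using mem_franklin_slope[of 0] zero_notin_D room_slope slope_pos by auto
qed

lemma slope_le_slope_franklin: "slope D \<le> slope (franklin D)"
proof (rule ccontr)
  interpret F: part_set "franklin D" by (rule part_set_franklin_slope)
  assume "\<not> slope D \<le> slope (franklin D)"
  then have "Max (franklin D) - slope (franklin D) \<in> franklin D"
    using mem_franklin_slope[of "Max (franklin D) - slope (franklin D)"] Max_franklin_slope room_slope
    by auto
  then show False using F.Max_minus_slope_notin by blast
qed

lemma not_exceptional_franklin_slope: "\<not> franklin_exceptional (franklin D)"
  unfolding franklin_exceptional_def Max_franklin_slope Min_franklin_slope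
  using slope_le_slope_franklin room_slope by auto

lemma sum_franklin_slope: "\<Sum>(franklin D) = \<Sum>D"
proof -
  let ?run = "{Max D + 1 - slope D..Max D}" and ?rest = "D - {Max D + 1 - slope D..Max D}"
  let ?shifted = "{Max D - slope D..Max D - 1}"
  have "\<Sum>D = \<Sum>?rest + \<Sum>?run" using top_run_subset finite_D by (rule sum.subset_diff)
  moreover have "\<Sum>(franklin D) = slope D + (\<Sum>?shifted + \<Sum>?rest)"
  proof -
    have "slope D \<notin> D" using Min_le_D slope_less_smallest by (meson leD)
    then have "slope D \<notin> ?shifted \<union> ?rest" using room_slope by auto
    then have "\<Sum>(franklin D) = slope D + \<Sum>(?shifted \<union> ?rest)"
      unfolding franklin_slope_eq using finite_D by (simp add: sum.insert)
    also have "\<Sum>(?shifted \<union> ?rest) = \<Sum>?shifted + \<Sum>?rest"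
    proof (rule sum.union_disjoint)
      have "x \<notin> ?rest" if "x \<in> ?shifted" for x
      proof -
        have "x = Max D - slope D \<or> Max D + 1 - slope D \<le> x" using that by auto
        then show ?thesis using Max_minus_slope_notin le_Max_D[of x] by auto
      qed
      then show "?shifted \<inter> ?rest = {}" by blast
    qed (use finite_D in auto)
    finally show ?thesis .
  qed
  moreover have "\<Sum>?run = \<Sum>?shifted + slope D"
  proof -
    have "?run = {Suc (Max D - slope D)..Suc (Max D - 1)}" using room_slope slope_pos by auto
    then have "\<Sum>?run = \<Sum>?shifted + card ?shifted"
      using sum_shift_interval[of "Max D - slope D" "Max D - 1"] by (simp only:)
    moreover have "card ?shifted = slope D" using room_slope slope_pos by simp
    ultimately show ?thesis by linarith
  qed
  ultimately show ?thesis by simp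
qed

lemma undo_franklin_slope:
  "{Max D + 1 - slope D..Max D} \<union> (franklin D - {slope D} - {Max D - slope D..Max D - 1}) = D"
proof (intro set_eqI iffI)
  fix x assume "x \<in> {Max D + 1 - slope D..Max D} \<union> (franklin D - {slope D} - {Max D - slope D..Max D - 1})"
  then consider "x \<in> {Max D + 1 - slope D..Max D}"
    | "x \<in> franklin D" "x \<noteq> slope D" "x \<notin> {Max D - slope D..Max D - 1}"
    by blast
  then show "x \<in> D"
  proof cases
    case 1
    then show ?thesis using top_run_subset by blast
  next
    case 2
    then show ?thesis using mem_franklin_slope[of x] by auto
  qed
next
  fix x assume x: "x \<in> D"
  show "x \<in> {Max D + 1 - slope D..Max D} \<union> (franklin D - {slope D} - {Max D - slope D..Max D - 1})"
  proof (cases "Max D + 1 - slope D \<le> x")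
    case True
    then show ?thesis using le_Max_D[OF x] by auto
  next
    case False
    moreover have "x \<noteq> Max D - slope D" using x Max_minus_slope_notin by auto
    ultimately have "x < Max D - slope D" using slope_le_Max by linarith
    moreover have "x \<noteq> slope D" using Min_le_D[OF x] slope_less_smallest by auto
    ultimately show ?thesis using mem_franklin_slope[of x] x by auto
  qed
qed

lemma franklin_franklin_slope: "franklin (franklin D) = D"
proof -
  have Max_eqs: "Max D - 1 + 2 - slope D = Max D + 1 - slope D" "Max D - 1 + 1 = Max D"
    "Max D - 1 + 1 - slope D = Max D - slope D"
    using room_slope by auto
  have "franklin (franklin D) = {Max D - 1 + 2 - slope D..Max D - 1 + 1}
      \<union> (franklin D - {slope D} - {Max D - 1 + 1 - slope D..Max D - 1})"
    unfolding franklin_def[of "franklin D"] Min_franklin_slope Max_franklin_slope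
    using slope_le_slope_franklin by simp
  also have "\<dots> = {Max D + 1 - slope D..Max D} \<union> (franklin D - {slope D} - {Max D - slope D..Max D - 1})"
    by (simp only: Max_eqs)
  also have "\<dots> = D" by (rule undo_franklin_slope)
  finally show ?thesis .
qed

end

lemma interval_if_exceptional:
  assumes "franklin_exceptional D"
  shows "\<exists>k\<ge>1. D = {k..<2*k} \<or> D = {Suc k..2*k}"
proof -
  from assms consider "Min D \<le> slope D" "Max D + 1 \<le> 2 * Min D" | "slope D < Min D" "Max D \<le> 2 * slope D"
    unfolding franklin_exceptional_def by auto
  then show ?thesis
  proof cases
    case 1
    have "D = {Min D..Max D}"
    proof
      show "D \<subseteq> {Min D..Max D}" using Min_le_D le_Max_D by auto
      show "{Min D..Max D} \<subseteq> D" using 1 by (intro order_trans[OF _ top_run_subset]) auto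
    qed
    moreover have "Max D + 1 = 2 * Min D" using 1 Min_le_top_run by linarith
    then have "{Min D..Max D} = {Min D..<2 * Min D}" by auto
    ultimately have "D = {Min D..<2 * Min D}" by simp
    then show ?thesis using Min_pos by (intro exI[of _ "Min D"]) auto
  next
    case 2
    have "D = {Max D + 1 - slope D..Max D}"
    proof
      show "{Max D + 1 - slope D..Max D} \<subseteq> D" by (rule top_run_subset)
      show "D \<subseteq> {Max D + 1 - slope D..Max D}"
      proof
        fix x assume x: "x \<in> D"
        then have "x \<noteq> Max D - slope D" "slope D < x" using Max_minus_slope_notin Min_le_D[of x] 2 by auto
        then show "x \<in> {Max D + 1 - slope D..Max D}" using le_Max_D[OF x] 2 by auto
      qed
    qed
    moreover have "Max D = 2 * slope D" using 2 Min_le_top_run by linarith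
    then have "{Max D + 1 - slope D..Max D} = {Suc (slope D)..2 * slope D}" by auto
    ultimately have "D = {Suc (slope D)..2 * slope D}" by simp
    then show ?thesis using slope_pos by (intro exI[of _ "slope D"]) auto
  qed
qed

lemma franklin_involution:
  assumes "\<not> franklin_exceptional D"
  shows "part_set (franklin D) \<and> \<Sum>(franklin D) = \<Sum>D \<and> \<not> franklin_exceptional (franklin D)
    \<and> franklin (franklin D) = D \<and> franklin D \<noteq> D"
proof (cases "Min D \<le> slope D")
  case True
  then have "2 * Min D \<le> Max D" using assms unfolding franklin_exceptional_def by auto
  with True show ?thesis
    using part_set_franklin_smallest sum_franklin_smallest not_exceptional_franklin_smallest
      franklin_franklin_smallest Min_franklin_smallest by (metis less_irrefl)
next
  case False
  then have "2 * slope D < Max D" using assms unfolding franklin_exceptional_def by auto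
  with False show ?thesis
    using part_set_franklin_slope sum_franklin_slope not_exceptional_franklin_slope
      franklin_franklin_slope Min_franklin_slope by (metis less_irrefl not_le)
qed

end

lemma exceptional_interval_lower:
  assumes "1 \<le> k" shows "franklin_exceptional {k..<2*k}"
proof -
  have Max: "Max {k..<2*k} = 2*k - 1" using assms by (intro Max_eqI) auto
  have "Min {k..<2*k} = k" using assms by (intro Min_eqI) auto
  moreover have "slope {k..<2*k} = k" by (rule slope_eqI) (use assms Max in auto)
  ultimately show ?thesis unfolding franklin_exceptional_def Max using assms by auto
qed

lemma exceptional_interval_upper:
  assumes "1 \<le> k" shows "franklin_exceptional {Suc k..2*k}"
proof -
  have Max: "Max {Suc k..2*k} = 2*k" using assms by (intro Max_eqI) auto
  have "Min {Suc k..2*k} = Suc k" using assms by (intro Min_eqI) auto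
  moreover have "slope {Suc k..2*k} = k" by (rule slope_eqI) (use assms Max in auto)
  ultimately show ?thesis unfolding franklin_exceptional_def Max using assms by auto
qed

section \<open>Generalised pentagonal numbers\<close>

fun pent :: "nat \<Rightarrow> nat" where
  "pent 0 = 0"
| "pent (Suc k) = pent k + 3 * k + 1"

definition gen_pentagonal :: "nat \<Rightarrow> bool" where
  "gen_pentagonal n \<longleftrightarrow> (\<exists>k. n = pent k \<or> n = pent k + k)"

lemma two_pent: "2 * pent k + k = 3 * k * k"
  by (induction k) (auto simp: algebra_simps)

lemma strict_mono_pent: "strict_mono pent"
  by (rule strict_monoI_Suc) simp

lemma strict_mono_pent_plus: "strict_mono (\<lambda>k. pent k + k)"
  by (rule strict_monoI_Suc) simp

lemma pent_mono: "i \<le> j \<Longrightarrow> pent i \<le> pent j"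
  using strict_mono_pent strict_mono_less_eq by blast

lemma sum_interval_pent: "\<Sum>{k..<2*k} = pent k"
proof (induction k)
  case 0
  then show ?case by simp
next
  case (Suc k)
  have "\<Sum>{k..<2*k+2} = \<Sum>{k..<2*k} + 2*k + (2*k+1)"
    by (simp add: sum.atLeastLessThan_Suc)
  moreover have "\<Sum>{k..<2*k+2} = k + \<Sum>{Suc k..<2*k+2}"
    by (subst sum.atLeast_Suc_lessThan) auto
  ultimately have "\<Sum>{Suc k..<2*k+2} = \<Sum>{k..<2*k} + 3*k + 1" by simp
  then show ?case using Suc by simp
qed

lemma sum_interval_pent_plus: "\<Sum>{Suc k..2*k} = pent k + k"
proof -
  have "{Suc k..<Suc (2*k)} = {Suc k..2*k}" by auto
  moreover have "\<Sum>{k..<Suc (2*k)} = \<Sum>{k..<2*k} + 2*k" by (rule sum.atLeastLessThan_Suc) simp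
  moreover have "\<Sum>{k..<Suc (2*k)} = k + \<Sum>{Suc k..<Suc (2*k)}" by (rule sum.atLeast_Suc_lessThan) simp
  ultimately show ?thesis using sum_interval_pent[of k] by simp
qed

lemma pent_neq_pent_plus:
  assumes "1 \<le> k'" shows "pent k \<noteq> pent k' + k'"
proof
  assume eq: "pent k = pent k' + k'"
  show False
  proof (cases "k \<le> k'")
    case True
    then show False using pent_mono[OF True] eq assms by simp
  next
    case False
    then have "pent (Suc k') \<le> pent k" by (intro pent_mono) simp
    then show False using eq by simp
  qed
qed

lemma not_gen_pentagonal_gap:
  assumes "pent k < y" "y < pent k + k"
  shows "\<not> gen_pentagonal y"
proof
  assume "gen_pentagonal y"
  then obtain j where "y = pent j \<or> y = pent j + j" unfolding gen_pentagonal_def by blast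
  moreover have "pent j \<le> pent k \<or> pent (Suc k) \<le> pent j" by (metis not_le Suc_leI pent_mono)
  moreover have "pent j + j \<le> pent k \<or> pent k + k \<le> pent j + j"
  proof (cases "k \<le> j")
    case True
    then show ?thesis using pent_mono[OF True] by simp
  next
    case False
    then have "pent (Suc j) \<le> pent k" by (intro pent_mono) simp
    then show ?thesis by simp
  qed
  ultimately show False using assms by auto
qed

lemma pent_plus_le_square: "u + pent u \<le> 2 * u^2"
proof -
  have "2 * pent u + u = 3 * (u * u)" using two_pent[of u] by (simp add: mult.assoc)
  moreover have "u \<le> u * u" by (cases u) auto
  ultimately show ?thesis unfolding power2_eq_square by linarith
qed

lemma exceptional_distinct_partitions:
  assumes "0 < n" "D \<in> distinct_partitions n" "franklin_exceptional D"
  shows "\<exists>k\<ge>1. (D = {k..<2*k} \<and> n = pent k) \<or> (D = {Suc k..2*k} \<and> n = pent k + k)"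
proof -
  have D: "finite D" "0 \<notin> D" "\<Sum>D = n" using assms(2) unfolding distinct_partitions_def by auto
  then have "D \<noteq> {}" using assms(1) by auto
  with D interpret part_set D by unfold_locales
  obtain k where "k \<ge> 1" "D = {k..<2*k} \<or> D = {Suc k..2*k}"
    using interval_if_exceptional[OF assms(3)] by blast
  then show ?thesis using D(3) sum_interval_pent[of k] sum_interval_pent_plus[of k] by auto
qed

lemma exceptional_distinct_partitions_unique:
  assumes "0 < n"
    and "D \<in> distinct_partitions n" "franklin_exceptional D"
    and "D' \<in> distinct_partitions n" "franklin_exceptional D'"
  shows "D = D'"
proof -
  obtain k where k: "k \<ge> 1" "(D = {k..<2*k} \<and> n = pent k) \<or> (D = {Suc k..2*k} \<and> n = pent k + k)"
    using exceptional_distinct_partitions[OF assms(1-3)] by blast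
  obtain k' where k': "k' \<ge> 1"
    "(D' = {k'..<2*k'} \<and> n = pent k') \<or> (D' = {Suc k'..2*k'} \<and> n = pent k' + k')"
    using exceptional_distinct_partitions[OF assms(1,4,5)] by blast
  have "pent k \<noteq> pent k' + k'" "pent k' \<noteq> pent k + k"
    using pent_neq_pent_plus k(1) k'(1) by auto
  moreover have "pent k = pent k' \<Longrightarrow> k = k'" "pent k + k = pent k' + k' \<Longrightarrow> k = k'"
    using strict_mono_eq[OF strict_mono_pent] strict_mono_eq[OF strict_mono_pent_plus, of k k'] by auto
  ultimately show ?thesis using k(2) k'(2) by auto
qed

lemma card_exceptional_distinct_partitions:
  assumes "0 < n"
  shows "card {D \<in> distinct_partitions n. franklin_exceptional D} = (if gen_pentagonal n then 1 else 0)"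
proof (cases "gen_pentagonal n")
  case False
  then have "{D \<in> distinct_partitions n. franklin_exceptional D} = {}"
    using exceptional_distinct_partitions[OF assms] unfolding gen_pentagonal_def by fast
  then have "card {D \<in> distinct_partitions n. franklin_exceptional D} = 0" by (simp only: card.empty)
  then show ?thesis using False by simp
next
  case True
  then obtain k where k: "n = pent k \<or> n = pent k + k" unfolding gen_pentagonal_def by blast
  have k1: "1 \<le> k" using k assms by (cases k) auto
  define I where "I = (if n = pent k then {k..<2*k} else {Suc k..2*k})"
  have "I \<in> distinct_partitions n \<and> franklin_exceptional I"
    using k k1 sum_interval_pent[of k] sum_interval_pent_plus[of k]
      exceptional_interval_lower[OF k1] exceptional_interval_upper[OF k1]
    unfolding I_def distinct_partitions_def by auto
  then have "{D \<in> distinct_partitions n. franklin_exceptional D} = {I}"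
    using exceptional_distinct_partitions_unique[OF assms] by blast
  then show ?thesis using True by simp
qed

theorem odd_card_distinct_partitions_iff: "odd (card (distinct_partitions n)) \<longleftrightarrow> gen_pentagonal n"
proof (cases "n = 0")
  case True
  have "gen_pentagonal 0" unfolding gen_pentagonal_def by (rule exI[of _ 0]) simp
  then show ?thesis using True by (simp add: distinct_partitions_0)
next
  case False
  let ?E = "{D \<in> distinct_partitions n. franklin_exceptional D}"
  let ?G = "{D \<in> distinct_partitions n. \<not> franklin_exceptional D}"
  have "finite ?E" "finite ?G" using finite_distinct_partitions[of n] by auto
  moreover have "?E \<inter> ?G = {}" by auto
  moreover have partition: "?E \<union> ?G = distinct_partitions n" by auto
  ultimately have "card (distinct_partitions n) = card ?E + card ?G"
    using card_Un_disjoint[of ?E ?G] unfolding partition by blast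
  moreover have "(of_nat (card ?G) :: bit) = 0"
  proof (rule card_bit_eq_0_if_involution)
    fix D assume "D \<in> ?G"
    then have D: "finite D" "0 \<notin> D" "\<Sum>D = n" "\<not> franklin_exceptional D"
      unfolding distinct_partitions_def by auto
    then have "D \<noteq> {}" using False by auto
    with D interpret part_set D by unfold_locales
    have "part_set (franklin D)" "\<Sum>(franklin D) = \<Sum>D" "\<not> franklin_exceptional (franklin D)"
      "franklin (franklin D) = D" "franklin D \<noteq> D"
      using franklin_involution[OF D(4)] by auto
    then show "franklin D \<in> ?G" "franklin (franklin D) = D" "franklin D \<noteq> D"
      using D(3) unfolding distinct_partitions_def part_set_def by auto
  qed
  ultimately have "(of_nat (card (distinct_partitions n)) :: bit) = of_bool (gen_pentagonal n)"
    using card_exceptional_distinct_partitions[of n] False by simp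
  then show ?thesis by (simp add: of_nat_bit of_bool_eq_iff)
qed

section \<open>The mex as the first missing term of a sequence\<close>

definition first_missing :: "(nat \<Rightarrow> nat) \<Rightarrow> nat multiset \<Rightarrow> nat" where
  "first_missing b L = (LEAST j. b j \<notin># L)"

locale mex_sequence =
  fixes b :: "nat \<Rightarrow> nat"
  assumes strict_mono_b: "strict_mono b" and b_0_pos: "0 < b 0"
begin

lemma le_b: "i + b 0 \<le> b i"
proof (induction i)
  case (Suc i)
  then show ?case using strict_monoD[OF strict_mono_b, of i "Suc i"] by simp
qed simp

lemma b_pos: "0 < b i"
  using le_b[of i] b_0_pos by simp

lemma first_missing_notin: "b (first_missing b L) \<notin># L"
proof -
  have "b (sum_mset L + 1) \<notin># L"
    using mem_le_sum_mset[of "b (sum_mset L + 1)" L] le_b[of "sum_mset L + 1"] by auto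
  then show ?thesis unfolding first_missing_def by (rule LeastI)
qed

lemma all_in_iff_le_first_missing: "(\<forall>i<j. b i \<in># L) \<longleftrightarrow> j \<le> first_missing b L"
proof
  assume "\<forall>i<j. b i \<in># L"
  then show "j \<le> first_missing b L" using first_missing_notin[of L] by (meson not_le)
next
  assume "j \<le> first_missing b L"
  then have "i < first_missing b L" if "i < j" for i using that by simp
  then show "\<forall>i<j. b i \<in># L" unfolding first_missing_def by (metis not_less_Least)
qed

lemma first_missing_le: "L \<in> partitions n \<Longrightarrow> first_missing b L \<le> n"
proof (cases "first_missing b L")
  case (Suc k)
  assume L: "L \<in> partitions n"
  have "b k \<in># L" using all_in_iff_le_first_missing[of "Suc k" L] Suc by simp
  then have "b k \<le> n" using mem_le_sum_mset[of "b k" L] L unfolding partitions_def by simp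
  then show ?thesis using le_b[of k] b_0_pos Suc by simp
qed simp

lemma le_sum_prefix: "j \<le> (\<Sum>i<j. b i)"
proof -
  have "j = (\<Sum>i<j. 1::nat)" by simp
  also have "\<dots> \<le> (\<Sum>i<j. b i)" by (rule sum_mono) (use b_pos in \<open>auto simp: Suc_le_eq\<close>)
  finally show ?thesis .
qed

lemma strict_mono_sum_prefix: "strict_mono (\<lambda>j. \<Sum>i<j. b i)"
  by (rule strict_monoI_Suc) (simp add: b_pos)

lemma card_partitions_containing_prefix:
  "card {L \<in> partitions n. \<forall>i<j. b i \<in># L}
    = (if (\<Sum>i<j. b i) \<le> n then card (partitions (n - (\<Sum>i<j. b i))) else 0)"
proof -
  define B where "B = mset_set (b ` {..<j})"
  have "sum_mset B = (\<Sum>x\<in>b ` {..<j}. x)" unfolding B_def by (simp add: sum_unfold_sum_mset)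
  also have "\<dots> = (\<Sum>i<j. b i)"
    using strict_mono_imp_inj_on[OF strict_mono_b] by (simp add: sum.reindex)
  finally have sum_B: "sum_mset B = (\<Sum>i<j. b i)" .
  have B_subset_iff: "B \<subseteq># L \<longleftrightarrow> (\<forall>i<j. b i \<in># L)" for L
    unfolding B_def by (auto simp: subseteq_mset_def count_mset_set' Suc_le_eq)
  have eq: "{L \<in> partitions n. \<forall>i<j. b i \<in># L} = {L \<in> partitions n. B \<subseteq># L}"
    using B_subset_iff by auto
  show ?thesis
  proof (cases "(\<Sum>i<j. b i) \<le> n")
    case False
    have "{L \<in> partitions n. B \<subseteq># L} = {}"
      using False sum_B unfolding partitions_def by (auto simp: subset_mset.le_iff_add)
    then have "card {L \<in> partitions n. \<forall>i<j. b i \<in># L} = 0" unfolding eq by (simp only: card.empty)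
    then show ?thesis using False by simp
  next
    case True
    have "bij_betw (\<lambda>L. L - B) {L \<in> partitions n. B \<subseteq># L} (partitions (n - (\<Sum>i<j. b i)))"
    proof (rule bij_betw_byWitness[where f' = "\<lambda>M. M + B"])
      show "\<forall>L\<in>{L \<in> partitions n. B \<subseteq># L}. L - B + B = L" by (auto simp: subset_mset.diff_add)
      show "\<forall>M\<in>partitions (n - (\<Sum>i<j. b i)). M + B - B = M" by simp
      show "(\<lambda>L. L - B) ` {L \<in> partitions n. B \<subseteq># L} \<subseteq> partitions (n - (\<Sum>i<j. b i))"
        unfolding partitions_def using sum_B by (auto simp: sum_mset_diff dest: in_diffD)
      show "(\<lambda>M. M + B) ` partitions (n - (\<Sum>i<j. b i)) \<subseteq> {L \<in> partitions n. B \<subseteq># L}"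
        unfolding partitions_def using sum_B True b_pos by (auto simp: B_def)
    qed
    then show ?thesis using eq True by (simp add: bij_betw_same_card)
  qed
qed

lemma card_even_first_missing_bit:
  "(of_nat (card {L \<in> partitions n. even (first_missing b L)}) :: bit)
    = (\<Sum>j\<le>n. of_nat (card {L \<in> partitions n. \<forall>i<j. b i \<in># L}))"
proof -
  have "(\<Sum>j\<le>n. of_nat (card {L \<in> partitions n. \<forall>i<j. b i \<in># L}) :: bit)
      = (\<Sum>j\<le>n. \<Sum>L\<in>partitions n. of_bool (j \<le> first_missing b L))"
    by (simp add: all_in_iff_le_first_missing finite_partitions Int_def)
  also have "\<dots> = (\<Sum>L\<in>partitions n. \<Sum>j\<le>n. of_bool (j \<le> first_missing b L))"
    by (rule sum.swap)
  also have "\<dots> = (\<Sum>L\<in>partitions n. of_bool (even (first_missing b L)))"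
  proof (rule sum.cong)
    fix L assume "L \<in> partitions n"
    then have "first_missing b L \<le> n" by (rule first_missing_le)
    then have "{..n} \<inter> {j. j \<le> first_missing b L} = {..first_missing b L}" by auto
    then show "(\<Sum>j\<le>n. of_bool (j \<le> first_missing b L)) = (of_bool (even (first_missing b L)) :: bit)"
      by (simp add: of_nat_bit)
  qed simp
  finally show ?thesis by (simp add: finite_partitions Int_def)
qed

lemma card_even_first_missing_prefix_sums_bit:
  assumes "x \<le> N"
  shows "(of_nat (card {L \<in> partitions x. even (first_missing b L)}) :: bit)
    = (\<Sum>j\<le>N. if (\<Sum>i<j. b i) \<le> x then of_nat (card (partitions (x - (\<Sum>i<j. b i)))) else 0)"
proof -
  have "(of_nat (card {L \<in> partitions x. \<forall>i<j. b i \<in># L}) :: bit)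
      = (if (\<Sum>i<j. b i) \<le> x then of_nat (card (partitions (x - (\<Sum>i<j. b i)))) else 0)" for j
    using card_partitions_containing_prefix[of x j] by simp
  then have "(of_nat (card {L \<in> partitions x. even (first_missing b L)}) :: bit)
      = (\<Sum>j\<le>x. if (\<Sum>i<j. b i) \<le> x then of_nat (card (partitions (x - (\<Sum>i<j. b i)))) else 0)"
    unfolding card_even_first_missing_bit by simp
  also have "\<dots> = (\<Sum>j\<le>N. if (\<Sum>i<j. b i) \<le> x then of_nat (card (partitions (x - (\<Sum>i<j. b i)))) else 0)"
    using assms le_sum_prefix by (intro sum.mono_neutral_left) (auto intro: le_trans)
  finally show ?thesis .
qed

lemma prefix_sum_distinct_convolution_bit:
  "(\<Sum>x\<le>N. (if c \<le> x then of_nat (card (partitions (x - c))) else 0)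
      * of_nat (card (distinct_partitions (N - x))) :: bit) = of_bool (c = N)"
proof -
  have "(\<Sum>x\<le>N. (if c \<le> x then of_nat (card (partitions (x - c))) else 0)
      * of_nat (card (distinct_partitions (N - x))) :: bit)
      = (\<Sum>x\<le>N. if c \<le> x then of_nat (card (partitions (x - c)) * card (distinct_partitions (N - x))) else 0)"
    by (intro sum.cong) simp_all
  also have "\<dots> = (if c \<le> N then \<Sum>y\<le>N - c. of_nat (card (partitions y) * card (distinct_partitions (N - c - y)))
      else 0)"
    by (rule sum_atMost_convolution_shift)
  also have "\<dots> = of_bool (c = N)"
    using partition_distinct_convolution_bit[of "N - c"] by auto
  finally show ?thesis .
qed

lemma sum_of_bool_prefix_sum_bit:
  "(\<Sum>j\<le>N. of_bool ((\<Sum>i<j. b i) = N) :: bit) = of_bool (\<exists>j. (\<Sum>i<j. b i) = N)"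
proof (cases "\<exists>j. (\<Sum>i<j. b i) = N")
  case True
  then obtain j0 where j0: "(\<Sum>i<j0. b i) = N" by blast
  have "(\<Sum>i<j. b i) = N \<longleftrightarrow> j = j0" for j
    using j0 strict_mono_eq[OF strict_mono_sum_prefix] by metis
  then have "(\<Sum>j\<le>N. of_bool ((\<Sum>i<j. b i) = N) :: bit) = (\<Sum>j\<le>N. of_bool (j = j0))" by simp
  also have "\<dots> = 1" using le_sum_prefix[of j0] j0 by simp
  finally show ?thesis using True by simp
qed simp

lemma even_first_missing_distinct_convolution_bit:
  "(\<Sum>x\<le>N. of_nat (card {L \<in> partitions x. even (first_missing b L)})
      * of_nat (card (distinct_partitions (N - x))) :: bit)
    = of_bool (\<exists>j. (\<Sum>i<j. b i) = N)"
proof -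
  have "(\<Sum>x\<le>N. of_nat (card {L \<in> partitions x. even (first_missing b L)})
      * of_nat (card (distinct_partitions (N - x))) :: bit)
    = (\<Sum>x\<le>N. \<Sum>j\<le>N. (if (\<Sum>i<j. b i) \<le> x then of_nat (card (partitions (x - (\<Sum>i<j. b i)))) else 0)
      * of_nat (card (distinct_partitions (N - x))))"
    by (intro sum.cong) (simp_all add: card_even_first_missing_prefix_sums_bit sum_distrib_right)
  also have "\<dots> = (\<Sum>j\<le>N. of_bool ((\<Sum>i<j. b i) = N))"
    by (subst sum.swap) (simp only: prefix_sum_distinct_convolution_bit)
  also have "\<dots> = of_bool (\<exists>j. (\<Sum>i<j. b i) = N)" by (rule sum_of_bool_prefix_sum_bit)
  finally show ?thesis .
qed

theorem odd_even_first_missing_pentagonal_convolution: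
  "odd (card {x. x \<le> N \<and> odd (card {L \<in> partitions x. even (first_missing b L)}) \<and> gen_pentagonal (N - x)})
    \<longleftrightarrow> (\<exists>j. (\<Sum>i<j. b i) = N)"
proof -
  let ?A = "\<lambda>x. odd (card {L \<in> partitions x. even (first_missing b L)})"
  have "(of_nat (card {x. x \<le> N \<and> ?A x \<and> gen_pentagonal (N - x)}) :: bit)
      = (\<Sum>x\<le>N. of_bool (?A x \<and> gen_pentagonal (N - x)))"
    by (rule sum_of_bool_atMost[symmetric])
  also have "\<dots> = (\<Sum>x\<le>N. of_nat (card {L \<in> partitions x. even (first_missing b L)})
      * of_nat (card (distinct_partitions (N - x))))"
    by (intro sum.cong) (simp_all add: of_nat_bit odd_card_distinct_partitions_iff)
  also have "\<dots> = of_bool (\<exists>j. (\<Sum>i<j. b i) = N)"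
    by (rule even_first_missing_distinct_convolution_bit)
  finally show ?thesis by (simp add: of_nat_bit of_bool_eq_iff)
qed

end

lemma residue_class_iff:
  fixes A a k :: nat
  assumes "0 < a" "a \<le> A"
  shows "0 < k \<and> k mod A = a mod A \<longleftrightarrow> (\<exists>i. k = a + i * A)"
proof
  assume k: "0 < k \<and> k mod A = a mod A"
  show "\<exists>i. k = a + i * A"
  proof (cases "a \<le> k")
    case True
    then have "A dvd k - a" using k mod_eq_dvd_iff_nat[OF True] by blast
    then obtain i where "k - a = A * i" by (elim dvdE)
    then show ?thesis using True by (intro exI[of _ i]) (simp add: algebra_simps)
  next
    case False
    then have "k mod A = k" "a mod A = (if a = A then 0 else a)" using assms by auto
    then show ?thesis using k False by (auto split: if_splits)
  qed
next
  assume "\<exists>i. k = a + i * A"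
  then show "0 < k \<and> k mod A = a mod A" using assms by auto
qed

lemma mex_eq_first_missing:
  assumes "0 < a" "a \<le> A"
  shows "mex A a L = a + first_missing (\<lambda>i. a + i * A) L * A"
  unfolding mex_def
proof (rule Least_equality)
  interpret mex_sequence "\<lambda>i. a + i * A"
    by unfold_locales (use assms in \<open>auto intro: strict_monoI_Suc\<close>)
  show "0 < a + first_missing (\<lambda>i. a + i * A) L * A
      \<and> (a + first_missing (\<lambda>i. a + i * A) L * A) mod A = a mod A
      \<and> a + first_missing (\<lambda>i. a + i * A) L * A \<notin># L"
    using assms(1) first_missing_notin[of L] by simp
  fix k assume k: "0 < k \<and> k mod A = a mod A \<and> k \<notin># L"
  then obtain i where i: "k = a + i * A" using residue_class_iff[OF assms] by blast
  then have "first_missing (\<lambda>i. a + i * A) L \<le> i"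
    unfolding first_missing_def using k by (intro Least_le) simp
  then show "a + first_missing (\<lambda>i. a + i * A) L * A \<le> k" unfolding i by simp
qed

lemma p_mex_eq_card_even_first_missing:
  assumes "0 < a" "a \<le> A"
  shows "p_mex A a n = card {L \<in> partitions n. even (first_missing (\<lambda>i. a + i * A) L)}"
proof -
  have "mex A a L mod (2 * A) = a mod (2 * A) \<longleftrightarrow> even (first_missing (\<lambda>i. a + i * A) L)" for L
  proof -
    have "(a + first_missing (\<lambda>i. a + i * A) L * A) mod (2 * A) = a mod (2 * A)
        \<longleftrightarrow> 2 * A dvd first_missing (\<lambda>i. a + i * A) L * A"
      using mod_eq_dvd_iff_nat[of a "a + first_missing (\<lambda>i. a + i * A) L * A" "2 * A"] by auto
    also have "\<dots> \<longleftrightarrow> even (first_missing (\<lambda>i. a + i * A) L)" using assms by auto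
    finally show ?thesis unfolding mex_eq_first_missing[OF assms] .
  qed
  then show ?thesis unfolding p_mex_def by simp
qed

theorem odd_p_mex_pentagonal_convolution:
  assumes "0 < a" "a \<le> A"
  shows "odd (card {x. x \<le> N \<and> odd (p_mex A a x) \<and> gen_pentagonal (N - x)})
    \<longleftrightarrow> (\<exists>j. (\<Sum>i<j. a + i * A) = N)"
proof -
  interpret mex_sequence "\<lambda>i. a + i * A"
    by unfold_locales (use assms in \<open>auto intro: strict_monoI_Suc\<close>)
  show ?thesis
    unfolding p_mex_eq_card_even_first_missing[OF assms] by (rule odd_even_first_missing_pentagonal_convolution)
qed

section \<open>Growth of the odd values\<close>

lemma pentagonal_convolution_gap:
  fixes P :: "nat \<Rightarrow> bool" and q :: nat
  assumes conv: "\<And>N. odd (card {x. x \<le> N \<and> P x \<and> gen_pentagonal (N - x)}) \<Longrightarrow> q dvd N"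
    and "\<not> q dvd 3" and "P c"
  shows "\<exists>c'. P c' \<and> c < c' \<and> c' \<le> c + pent (c + 3)"
proof (rule ccontr)
  assume no_next: "\<not> (\<exists>c'. P c' \<and> c < c' \<and> c' \<le> c + pent (c + 3))"
  have dvd_at: "q dvd c + pent k" if k: "c < k" "k \<le> c + 3" for k
  proof (rule conv)
    have "{x. x \<le> c + pent k \<and> P x \<and> gen_pentagonal (c + pent k - x)} = {c}"
    proof (intro set_eqI iffI)
      fix x assume x: "x \<in> {x. x \<le> c + pent k \<and> P x \<and> gen_pentagonal (c + pent k - x)}"
      have "\<not> x < c"
      proof
        assume "x < c"
        then have "pent k < c + pent k - x" "c + pent k - x < pent k + k" using k by auto
        then show False using not_gen_pentagonal_gap x by blast
      qed
      moreover have "\<not> c < x"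
      proof
        assume "c < x"
        moreover have "pent k \<le> pent (c + 3)" using k by (intro pent_mono) simp
        ultimately show False using no_next x by auto
      qed
      ultimately show "x \<in> {c}" by simp
    next
      fix x assume "x \<in> {c}"
      then show "x \<in> {x. x \<le> c + pent k \<and> P x \<and> gen_pentagonal (c + pent k - x)}"
        using \<open>P c\<close> unfolding gen_pentagonal_def by auto
    qed
    then show "odd (card {x. x \<le> c + pent k \<and> P x \<and> gen_pentagonal (c + pent k - x)})" by simp
  qed
  have d1: "q dvd c + pent (c + 1)" and d2: "q dvd c + pent (c + 2)" and d3: "q dvd c + pent (c + 3)"
    by (rule dvd_at; simp)+
  have step2: "c + pent (c + 2) = (c + pent (c + 1)) + (3 * c + 4)"
    and step3: "c + pent (c + 3) = (c + pent (c + 2)) + ((3 * c + 4) + 3)"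
    by (simp_all add: numeral_eq_Suc)
  from d2 have "q dvd 3 * c + 4" unfolding step2 dvd_add_right_iff[OF d1] .
  moreover from d3 have "q dvd (3 * c + 4) + 3" unfolding step3 dvd_add_right_iff[OF d2] .
  ultimately have "q dvd 3" using dvd_add_right_iff by blast
  with \<open>\<not> q dvd 3\<close> show False by contradiction
qed

lemma card_ge_if_square_gaps:
  fixes P :: "nat \<Rightarrow> bool"
  assumes "P 0" and step: "\<And>c. P c \<Longrightarrow> \<exists>c'. P c' \<and> c < c' \<and> c' + 3 \<le> 2 * (c + 3)^2"
  shows "r \<le> card {n. 1 \<le> n \<and> n \<le> 6 ^ 2 ^ r \<and> P n}"
proof -
  have "\<exists>c. P c \<and> 2 * (c + 3) \<le> 6 ^ 2 ^ r \<and> r \<le> card {n. 1 \<le> n \<and> n \<le> c \<and> P n}"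
  proof (induction r)
    case 0
    show ?case using \<open>P 0\<close> by (intro exI[of _ 0]) simp
  next
    case (Suc r)
    then obtain c where c: "P c" "2 * (c + 3) \<le> 6 ^ 2 ^ r" "r \<le> card {n. 1 \<le> n \<and> n \<le> c \<and> P n}"
      by blast
    obtain c' where c': "P c'" "c < c'" "c' + 3 \<le> 2 * (c + 3)^2" using step[OF c(1)] by blast
    have "2 * (c' + 3) \<le> 2 * (2 * (c + 3)^2)" using c'(3) by simp
    also have "\<dots> = (2 * (c + 3))^2" by (simp only: power_mult_distrib) simp
    also have "\<dots> \<le> (6 ^ 2 ^ r)^2" using c(2) by (rule power_mono) simp
    also have "\<dots> = 6 ^ 2 ^ Suc r" by (simp flip: power_mult)
    finally have bound: "2 * (c' + 3) \<le> 6 ^ 2 ^ Suc r" .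
    have "insert c' {n. 1 \<le> n \<and> n \<le> c \<and> P n} \<subseteq> {n. 1 \<le> n \<and> n \<le> c' \<and> P n}"
      using c' by auto
    then have "card (insert c' {n. 1 \<le> n \<and> n \<le> c \<and> P n}) \<le> card {n. 1 \<le> n \<and> n \<le> c' \<and> P n}"
      by (rule card_mono[rotated]) simp
    then have "Suc r \<le> card {n. 1 \<le> n \<and> n \<le> c' \<and> P n}" using c(3) c'(2) by simp
    then show ?case using c'(1) bound by blast
  qed
  then obtain c where c: "2 * (c + 3) \<le> 6 ^ 2 ^ r" "r \<le> card {n. 1 \<le> n \<and> n \<le> c \<and> P n}" by blast
  have "{n. 1 \<le> n \<and> n \<le> c \<and> P n} \<subseteq> {n. 1 \<le> n \<and> n \<le> 6 ^ 2 ^ r \<and> P n}" using c(1) by auto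
  then have "card {n. 1 \<le> n \<and> n \<le> c \<and> P n} \<le> card {n. 1 \<le> n \<and> n \<le> 6 ^ 2 ^ r \<and> P n}"
    by (rule card_mono[rotated]) simp
  then show ?thesis using c(2) by simp
qed

lemma loglog_le_card_if_doubly_exponential:
  fixes P :: "nat \<Rightarrow> bool" and c :: nat
  assumes "1 < c" and count: "\<And>r. r \<le> card {n. 1 \<le> n \<and> n \<le> c ^ 2 ^ r \<and> P n}"
  shows "\<forall>\<^sub>F X in at_top. 1/2 * ln (ln X) \<le> real (card {n. 1 \<le> n \<and> real n \<le> X \<and> P n})"
proof -
  have "\<forall>\<^sub>F X in at_top. 1/2 * ln (ln X) \<le> ln (ln X) - ln (ln (real c)) - 1" by real_asymp
  moreover have "\<forall>\<^sub>F X in at_top. real c < X" by (rule eventually_gt_at_top)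
  ultimately show ?thesis
  proof eventually_elim
    case (elim X)
    have ln_c: "0 < ln (real c)" using assms(1) by simp
    have "ln (real c) < ln X" using elim(2) assms(1) by simp
    then have ln_ln: "ln (ln (real c)) < ln (ln X)" using ln_c by simp
    define r where "r = nat \<lfloor>ln (ln X) - ln (ln (real c))\<rfloor>"
    have r_lower: "ln (ln X) - ln (ln (real c)) - 1 < real r"
      unfolding r_def using ln_ln by linarith
    have r_upper: "real r \<le> ln (ln X) - ln (ln (real c))"
      unfolding r_def using ln_ln by linarith
    have "(2::real) ^ r \<le> exp 1 ^ r"
      using exp_ge_add_one_self[of 1] by (intro power_mono) simp_all
    also have "\<dots> = exp (real r)" by (simp add: exp_of_nat_mult[symmetric])
    also have "\<dots> \<le> exp (ln (ln X) - ln (ln (real c)))" using r_upper by simp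
    also have "\<dots> = ln X / ln (real c)" using ln_c \<open>ln (real c) < ln X\<close> by (simp add: exp_diff)
    finally have "2 ^ r * ln (real c) \<le> ln X" using ln_c by (simp add: field_simps)
    then have "ln (real (c ^ 2 ^ r)) \<le> ln X" by (simp add: ln_realpow)
    then have "real (c ^ 2 ^ r) \<le> X" using assms(1) elim(2) by (simp add: ln_le_cancel_iff)
    then have "{n. 1 \<le> n \<and> n \<le> c ^ 2 ^ r \<and> P n} \<subseteq> {n. 1 \<le> n \<and> real n \<le> X \<and> P n}"
      by (auto intro: order_trans[rotated] simp flip: of_nat_le_iff)
    moreover have "finite {n. 1 \<le> n \<and> real n \<le> X \<and> P n}"
    proof (rule finite_subset)
      have "n \<le> nat \<lceil>X\<rceil>" if "real n \<le> X" for n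
      proof -
        have "int n \<le> \<lceil>X\<rceil>" using that by (simp add: le_ceiling_iff)
        then show ?thesis by (metis nat_int nat_mono)
      qed
      then show "{n. 1 \<le> n \<and> real n \<le> X \<and> P n} \<subseteq> {..nat \<lceil>X\<rceil>}" by auto
    qed simp
    ultimately have "r \<le> card {n. 1 \<le> n \<and> real n \<le> X \<and> P n}" using count[of r] by (meson card_mono le_trans)
    then show ?case using elim(1) r_lower by linarith
  qed
qed

lemma odd_p_mex_0:
  assumes "0 < a" "a dvd A" "0 < A"
  shows "odd (p_mex A a 0)"
proof -
  have a_le: "a \<le> A" using assms(2,3) by (rule dvd_imp_le)
  have "first_missing (\<lambda>i. a + i * A) {#} = 0" unfolding first_missing_def by simp
  then have "{L \<in> partitions 0. even (first_missing (\<lambda>i. a + i * A) L)} = {{#}}"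
    by (auto simp: partitions_0)
  then show ?thesis using p_mex_eq_card_even_first_missing[OF assms(1) a_le, of 0] by simp
qed

lemma odd_p_mex_next:
  assumes "0 < a" "a dvd A" "0 < A" and "\<not> a dvd 3" and "odd (p_mex A a c)"
  shows "\<exists>c'. odd (p_mex A a c') \<and> c < c' \<and> c' + 3 \<le> 2 * (c + 3)^2"
proof -
  have a_le: "a \<le> A" using assms(2,3) by (rule dvd_imp_le)
  have "a dvd N" if "odd (card {x. x \<le> N \<and> odd (p_mex A a x) \<and> gen_pentagonal (N - x)})" for N
    using that odd_p_mex_pentagonal_convolution[OF assms(1) a_le] assms(2) by (auto intro!: dvd_sum)
  then obtain c' where "odd (p_mex A a c')" "c < c'" "c' \<le> c + pent (c + 3)"
    using pentagonal_convolution_gap[of "\<lambda>x. odd (p_mex A a x)" a c] assms(4,5) by blast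
  moreover have "c + 3 + pent (c + 3) \<le> 2 * (c + 3)^2" by (rule pent_plus_le_square)
  ultimately show ?thesis by (intro exI[of _ c']) simp
qed

lemma not_dvd_3_if_prime:
  fixes p :: nat
  assumes "prime p" "p \<noteq> 3"
  shows "\<not> p dvd 3"
proof
  assume "p dvd 3"
  then have "p \<le> 3" by (rule dvd_imp_le) simp
  moreover have "2 \<le> p" using assms(1) by (rule prime_ge_2_nat)
  ultimately show False using assms \<open>p dvd 3\<close> by (cases "p = 2") auto
qed

theorem theorem1p2:
  fixes m p :: nat
  assumes "0 < m" and "prime p" and "m mod 3 \<noteq> 0" and "p mod 3 = 1"
  shows "\<exists>\<beta>::real. \<beta> > 0 \<and>
    (\<forall>\<^sub>F X in at_top. real (card {n::nat. 1 \<le> n \<and> real n \<le> X \<and> odd (p_mex (m * p) p n)})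
        \<ge> \<beta> * ln (ln X))"
proof -
  have p: "0 < p" "p dvd m * p" "0 < m * p" using assms(1,2) prime_gt_0_nat by auto
  have "\<not> p dvd 3" using not_dvd_3_if_prime[OF assms(2)] assms(4) by auto
  have "r \<le> card {n. 1 \<le> n \<and> n \<le> 6 ^ 2 ^ r \<and> odd (p_mex (m * p) p n)}" for r
    using odd_p_mex_0[OF p] odd_p_mex_next[OF p \<open>\<not> p dvd 3\<close>] by (rule card_ge_if_square_gaps)
  then have "\<forall>\<^sub>F X in at_top. 1/2 * ln (ln X)
      \<le> real (card {n. 1 \<le> n \<and> real n \<le> X \<and> odd (p_mex (m * p) p n)})"
    by (intro loglog_le_card_if_doubly_exponential[of 6]) simp_all
  then show ?thesis by (intro exI[of _ "1/2"]) simp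
qed

end
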